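(* Let $f_i:\mathbb{R}^d\to\mathbb{R}$ be twice differentiable, let $\lambda\in[0,1)$, $w^t\in\mathbb{R}^d$, $s^t\ge0$, and let $$q_{i,t}(w)=f_i(w^t)+\langle\nabla f_i(w^t),w-w^t\rangle+\tfrac12\langle\nabla^2 f_i(w^t)(w-w^t),w-w^t\rangle .$$ Define $$(w^{t+1/2},s^{t+1/2})=\arg\min_{s\ge0,\,w\in\mathbb{R}^d}\ \tfrac{1-\lambda}{2}\big(\|w-w^t\|^2+(s-s^t)^2\big)+\tfrac{\lambda}{2}s^2\ \text{ s.t. }\ q_{i,t}(w^t)+\langle\nabla q_{i,t}(w^t),w-w^t\rangle\le s,$$ $$(w^{t+1},s^{t+1})=\arg\min_{s\ge0,\,w\in\mathbb{R}^d}\ \tfrac{1-\lambda}{2}\big(\|w-w^{t+1/2}\|^2+(s-s^{t+1/2})^2\big)+\tfrac{\lambda}{2}s^2\ \text{ s.t. }\ q_{i,t}(w^{t+1/2})+\langle\nabla q_{i,t}(w^{t+1/2}),w-w^{t+1/2}\rangle\le s.$$ Then $$w^{t+1}=w^t-(\Gamma_1+\Gamma_2)\nabla f_i(w^t)+\Gamma_2\Gamma_1\nabla^2 f_i(w^t)\nabla f_i(w^t),\qquad s^{t+1}=(1-\lambda)\big((1-\lambda)(s^t+\Gamma_1)+\Gamma_2\big),$$ where $$\Gamma_1=\frac{(f_i(w^t)-(1-\lambda)s^t)_+}{1-\lambda+\|\nabla f_i(w^t)\|^2},$$ $$\Gamma_2=\left(\frac{f_i(w^t)-\Gamma_1\|\nabla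 f_i(w^t)\|^2-(1-\lambda)^2(s^t+\Gamma_1)+\tfrac12\Gamma_1^2\langle\nabla^2 f_i(w^t)\nabla f_i(w^t),\nabla f_i(w^t)\rangle}{1-\lambda+\|\nabla f_i(w^t)-\Gamma_1\nabla^2 f_i(w^t)\nabla f_i(w^t)\|^2}\right)_+,$$ and $(x)_+=x$ if $x\ge0$ and $(x)_+=0$ otherwise.
   Context: This two-step update is called SP2L2$^+$; it approximately solves the L2-slack formulation $\min_{s,w}\frac12 s^2$ s.t. $f_i(w)\le s$ for all $i$. *)

theory Defs
  imports "HOL-Analysis.Analysis"
begin

definition grad :: "(real^'n \<Rightarrow> real) \<Rightarrow> real^'n \<Rightarrow> real^'n" where
  "grad F x = (THE v. (F has_derivative (\<lambda>h. v \<bullet> h)) (at x))"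

definition hess :: "(real^'n \<Rightarrow> real) \<Rightarrow> real^'n \<Rightarrow> real^'n^'n" where
  "hess F x = (THE A. (grad F has_derivative (\<lambda>h. A *v h)) (at x))"

definition twice_differentiable :: "(real^'n \<Rightarrow> real) \<Rightarrow> bool" where
  "twice_differentiable F \<longleftrightarrow>
     (\<forall>x. F differentiable (at x)) \<and> (\<forall>x. grad F differentiable (at x))"

definition qmodel :: "(real^'n \<Rightarrow> real) \<Rightarrow> real^'n \<Rightarrow> real^'n \<Rightarrow> real" where
  "qmodel f wt w = f wt + grad f wt \<bullet> (w - wt)
                  + 1/2 * ((hess f wt *v (w - wt)) \<bullet> (w - wt))"

definition pos :: "real \<Rightarrow> real" where
  "pos x = (if x \<ge> 0 then x else 0)"

definition obj :: "real \<Rightarrow> real^'n \<Rightarrow> real \<Rightarrow> real^'n \<Rightarrow> real \<Rightarrow> real" where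
  "obj lam wc sc w s = (1 - lam) / 2 * ((norm (w - wc))\<^sup>2 + (s - sc)\<^sup>2) + lam / 2 * s\<^sup>2"

definition is_step_min ::
  "real \<Rightarrow> (real^'n \<Rightarrow> real) \<Rightarrow> real^'n \<Rightarrow> real \<Rightarrow> real^'n \<Rightarrow> real \<Rightarrow> bool" where
  "is_step_min lam q wc sc w s \<longleftrightarrow>
     (let feas = (\<lambda>w' s'. s' \<ge> 0 \<and> q wc + grad q wc \<bullet> (w' - wc) \<le> s')
      in feas w s \<and> (\<forall>w' s'. feas w' s' \<longrightarrow> obj lam wc sc w s \<le> obj lam wc sc w' s'))"

end

theory Submission
  imports Defs
begin

text \<open>Each sub-step minimises a strongly convex quadratic in \<open>(w, s)\<close> over the half-space
  cut out by a linearised constraint (the bound \<open>s \<ge> 0\<close> turns out to be inactive), so its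
  minimiser is explicit: \<open>w = w\<^sub>c - \<Gamma> v\<close>, \<open>s = (1 - \<lambda>)(s\<^sub>c + \<Gamma>)\<close> with \<open>v\<close> the gradient of
  the linearised function and \<open>\<Gamma>\<close> a clipped step size; optimality follows from an exact
  expansion of the objective around this candidate. The first step linearises \<open>q\<close> at
  \<open>w\<^sup>t\<close>, where its gradient is \<open>\<nabla>f(w\<^sup>t)\<close>; the second at \<open>w\<^sup>t - \<Gamma>\<^sub>1 \<nabla>f(w\<^sup>t)\<close>, where
  its gradient is \<open>\<nabla>f(w\<^sup>t) - \<Gamma>\<^sub>1 \<nabla>\<^sup>2f(w\<^sup>t) \<nabla>f(w\<^sup>t)\<close>. The latter needs the Hessian to be
  symmetric, which for a merely twice Frechet differentiable \<open>f\<close> is proved by comparing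
  the two mean value estimates of the second difference
  \<open>f(x + tu + tv) - f(x + tu) - f(x + tv) + f(x)\<close>.\<close>

lemma has_real_derivative_along_line:
  fixes F :: "'a::real_inner \<Rightarrow> real"
  assumes "\<And>p. (F has_derivative (\<lambda>h. G p \<bullet> h)) (at p)"
  shows "((\<lambda>s. F (c + s *\<^sub>R u)) has_real_derivative (G (c + s *\<^sub>R u) \<bullet> u)) (at s)"
proof -
  have "((\<lambda>s. c + s *\<^sub>R u) has_derivative (\<lambda>h. h *\<^sub>R u)) (at s)"
    by (auto intro!: derivative_eq_intros)
  from has_derivative_compose[OF this assms]
  show ?thesis
    by (simp add: has_field_derivative_def mult_commute_abs)
qed

lemma derivative_increment_bound:
  fixes G L :: "'a::real_normed_vector \<Rightarrow> 'a"
  assumes "linear L"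
    and approx: "\<And>y. norm (y - x) < d \<Longrightarrow> norm (G y - G x - L (y - x)) \<le> e * norm (y - x)"
    and "norm a < d" "norm b < d"
  shows "norm (G (x + a) - G (x + b) - L (a - b)) \<le> e * (norm a + norm b)"
proof -
  have "G (x + a) - G (x + b) - L (a - b)
        = (G (x + a) - G x - L a) - (G (x + b) - G x - L b)"
    using linear_diff[OF assms(1)] by simp
  also have "norm \<dots> \<le> norm (G (x + a) - G x - L a) + norm (G (x + b) - G x - L b)"
    by (rule norm_triangle_ineq4)
  also have "\<dots> \<le> e * norm a + e * norm b"
    using approx[of "x + a"] approx[of "x + b"] assms(3,4) by (intro add_mono) simp_all
  finally show ?thesis
    by (simp add: distrib_left)
qed

lemma second_difference_approx:
  fixes F :: "'a::real_inner \<Rightarrow> real"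
  assumes dF: "\<And>p. (F has_derivative (\<lambda>h. G p \<bullet> h)) (at p)"
    and "linear L" and "e \<ge> 0"
    and approx: "\<And>y. norm (y - x) < d \<Longrightarrow> norm (G y - G x - L (y - x)) \<le> e * norm (y - x)"
    and t: "t > 0" "t * (norm u + norm v) < d"
  shows "\<bar>F (x + t *\<^sub>R u + t *\<^sub>R v) - F (x + t *\<^sub>R u) - F (x + t *\<^sub>R v) + F x - t\<^sup>2 * (L v \<bullet> u)\<bar>
         \<le> t\<^sup>2 * (e * (norm u * (2 * norm u + norm v)))"
proof -
  define \<phi> where "\<phi> s = F (x + t *\<^sub>R v + s *\<^sub>R u) - F (x + s *\<^sub>R u) - s * t * (L v \<bullet> u)" for s
  define \<phi>' where "\<phi>' s = (G (x + t *\<^sub>R v + s *\<^sub>R u) - G (x + s *\<^sub>R u) - t *\<^sub>R L v) \<bullet> u" for s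
  have line: "((\<lambda>s. F (c + s *\<^sub>R u)) has_real_derivative (G (c + s *\<^sub>R u) \<bullet> u)) (at s)"
    for c s
    by (rule has_real_derivative_along_line[OF dF])
  have "(\<phi> has_real_derivative \<phi>' s) (at s)" for s
    unfolding \<phi>_def \<phi>'_def inner_diff_left
    by (intro DERIV_diff line) (auto intro!: derivative_eq_intros)
  then obtain z where z: "0 < z" "z < t" "\<phi> t - \<phi> 0 = (t - 0) * \<phi>' z"
    using MVT2[OF t(1), of \<phi> \<phi>'] by blast
  have nzu: "norm (z *\<^sub>R u) \<le> t * norm u"
    using z by (simp add: mult_right_mono)
  have nzuv: "norm (z *\<^sub>R u + t *\<^sub>R v) \<le> t * norm u + t * norm v"
    using nzu norm_triangle_ineq[of "z *\<^sub>R u" "t *\<^sub>R v"] t(1) by simp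
  have "norm (z *\<^sub>R u + t *\<^sub>R v) < d" "norm (z *\<^sub>R u) < d"
    using nzu nzuv t(1,2) by (simp_all add: distrib_left) (smt (verit) mult_nonneg_nonneg norm_ge_zero)
  from derivative_increment_bound[where G = G and L = L and x = x and d = d and e = e,
      OF assms(2) approx this]
  have "norm (G (x + (z *\<^sub>R u + t *\<^sub>R v)) - G (x + z *\<^sub>R u) - L (t *\<^sub>R v))
        \<le> e * (norm (z *\<^sub>R u + t *\<^sub>R v) + norm (z *\<^sub>R u))"
    by simp
  also have "\<dots> \<le> e * (t * (2 * norm u + norm v))"
    using nzu nzuv \<open>e \<ge> 0\<close> by (intro mult_left_mono) (simp_all add: algebra_simps)
  finally have "norm (G (x + t *\<^sub>R v + z *\<^sub>R u) - G (x + z *\<^sub>R u) - t *\<^sub>R L v)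
                \<le> e * (t * (2 * norm u + norm v))"
    by (simp add: linear_scale[OF assms(2)] add.commute add.left_commute)
  then have "\<bar>\<phi>' z\<bar> \<le> e * (t * (2 * norm u + norm v)) * norm u"
    unfolding \<phi>'_def by (meson Cauchy_Schwarz_ineq2 mult_right_mono norm_ge_zero order_trans)
  moreover have "\<phi> t - \<phi> 0 = F (x + t *\<^sub>R u + t *\<^sub>R v) - F (x + t *\<^sub>R u) - F (x + t *\<^sub>R v) + F x
                              - t\<^sup>2 * (L v \<bullet> u)"
    unfolding \<phi>_def by (simp add: algebra_simps power2_eq_square)
  moreover have "\<bar>\<phi> t - \<phi> 0\<bar> = t * \<bar>\<phi>' z\<bar>"
    using z(3) t(1) by (simp add: abs_mult)
  ultimately show ?thesis
    using t(1) by (simp add: power2_eq_square mult_left_mono ac_simps)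
qed

lemma derivative_of_gradient_symmetric:
  fixes F :: "'a::real_inner \<Rightarrow> real"
  assumes dF: "\<And>p. (F has_derivative (\<lambda>h. G p \<bullet> h)) (at p)"
    and dG: "(G has_derivative L) (at x)"
  shows "L u \<bullet> v = L v \<bullet> u"
proof -
  have lin: "linear L"
    using dG has_derivative_linear by blast
  define C where "C = norm u * (2 * norm u + norm v) + norm v * (2 * norm v + norm u)"
  have C0: "C \<ge> 0"
    unfolding C_def by simp
  have bound: "\<bar>L v \<bullet> u - L u \<bullet> v\<bar> \<le> e * C" if "e > 0" for e
  proof -
    obtain d where "d > 0" and approx:
      "\<And>y. norm (y - x) < d \<Longrightarrow> norm (G y - G x - L (y - x)) \<le> e * norm (y - x)"
      using dG \<open>e > 0\<close> unfolding has_derivative_at_alt by blast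
    define t where "t = d / (norm u + norm v + 1)"
    have "norm u + norm v + 1 > 0"
      by (simp add: add_nonneg_pos)
    then have "t > 0" and "t * (norm u + norm v) < d"
      using \<open>d > 0\<close> by (simp_all add: t_def field_simps)
    define \<Delta> where "\<Delta> = F (x + t *\<^sub>R u + t *\<^sub>R v) - F (x + t *\<^sub>R u) - F (x + t *\<^sub>R v) + F x"
    have "\<bar>\<Delta> - t\<^sup>2 * (L v \<bullet> u)\<bar> \<le> t\<^sup>2 * (e * (norm u * (2 * norm u + norm v)))"
      unfolding \<Delta>_def using \<open>e > 0\<close> \<open>t > 0\<close> \<open>t * (norm u + norm v) < d\<close>
      by (intro second_difference_approx[where d = d, OF dF lin _ approx]) auto
    moreover have "\<bar>\<Delta> - t\<^sup>2 * (L u \<bullet> v)\<bar> \<le> t\<^sup>2 * (e * (norm v * (2 * norm v + norm u)))"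
      using second_difference_approx[where d = d and t = t and u = v and v = u, OF dF lin _ approx]
        \<open>e > 0\<close> \<open>t > 0\<close> \<open>t * (norm u + norm v) < d\<close>
      unfolding \<Delta>_def by (simp add: ac_simps)
    ultimately have "\<bar>(\<Delta> - t\<^sup>2 * (L u \<bullet> v)) - (\<Delta> - t\<^sup>2 * (L v \<bullet> u))\<bar> \<le> t\<^sup>2 * (e * C)"
      unfolding C_def by (simp add: algebra_simps)
    then have "t\<^sup>2 * \<bar>L v \<bullet> u - L u \<bullet> v\<bar> \<le> t\<^sup>2 * (e * C)"
      by (simp add: abs_mult right_diff_distrib[symmetric])
    then show ?thesis
      using \<open>t > 0\<close> by simp
  qed
  have "\<bar>L v \<bullet> u - L u \<bullet> v\<bar> \<le> 0"
  proof (rule field_le_epsilon)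
    fix \<epsilon> :: real
    assume "\<epsilon> > 0"
    then have "\<bar>L v \<bullet> u - L u \<bullet> v\<bar> \<le> \<epsilon> / (C + 1) * C"
      using C0 by (intro bound) simp
    also have "\<dots> \<le> \<epsilon>"
      using C0 \<open>\<epsilon> > 0\<close> by (simp add: field_simps)
    finally show "\<bar>L v \<bullet> u - L u \<bullet> v\<bar> \<le> 0 + \<epsilon>"
      by simp
  qed
  then show ?thesis
    by simp
qed

lemma grad_eqI:
  fixes F :: "real^'n \<Rightarrow> real"
  assumes "(F has_derivative (\<lambda>h. v \<bullet> h)) (at x)"
  shows "grad F x = v"
  unfolding grad_def
proof (rule the_equality)
  show "(F has_derivative (\<lambda>h. v \<bullet> h)) (at x)"
    by fact
  fix w
  assume "(F has_derivative (\<lambda>h. w \<bullet> h)) (at x)"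
  then have "(\<lambda>h. w \<bullet> h) = (\<lambda>h. v \<bullet> h)"
    using assms has_derivative_unique by blast
  then have "(w - v) \<bullet> (w - v) = 0"
    by (metis inner_diff_left right_minus_eq)
  then show "w = v"
    by simp
qed

lemma has_derivative_grad:
  fixes F :: "real^'n \<Rightarrow> real"
  assumes "F differentiable (at x)"
  shows "(F has_derivative (\<lambda>h. grad F x \<bullet> h)) (at x)"
proof -
  obtain D where D: "(F has_derivative D) (at x)"
    using assms differentiable_def by blast
  have "D = (\<lambda>h. adjoint D 1 \<bullet> h)"
    using adjoint_works[OF has_derivative_linear[OF D], of _ 1] by (auto simp: inner_commute)
  with D show ?thesis
    using grad_eqI by metis
qed

lemma has_derivative_hess:
  fixes F :: "real^'n \<Rightarrow> real"
  assumes "grad F differentiable (at x)"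
  shows "(grad F has_derivative (\<lambda>h. hess F x *v h)) (at x)"
proof -
  obtain D where "(grad F has_derivative D) (at x)"
    using assms differentiable_def by blast
  then have DA: "(grad F has_derivative (\<lambda>h. matrix D *v h)) (at x)"
    using has_derivative_linear by fastforce
  have "hess F x = matrix D"
    unfolding hess_def
  proof (rule the_equality)
    show "(grad F has_derivative (\<lambda>h. matrix D *v h)) (at x)"
      by (fact DA)
    fix A
    assume "(grad F has_derivative (\<lambda>h. A *v h)) (at x)"
    then have "(\<lambda>h. A *v h) = (\<lambda>h. matrix D *v h)"
      using DA has_derivative_unique by blast
    then show "A = matrix D"
      by (metis matrix_eq)
  qed
  with DA show ?thesis
    by simp
qed

lemma hess_symmetric:
  fixes F :: "real^'n \<Rightarrow> real"
  assumes "twice_differentiable F"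
  shows "(hess F x *v u) \<bullet> v = (hess F x *v v) \<bullet> u"
  using assms unfolding twice_differentiable_def
  by (intro derivative_of_gradient_symmetric[where F = F and G = "grad F"])
    (auto intro: has_derivative_grad has_derivative_hess)

lemma grad_quadratic:
  fixes A :: "real^'n^'n"
  assumes symm: "\<And>u v. (A *v u) \<bullet> v = (A *v v) \<bullet> u"
  shows "grad (\<lambda>w. c + g \<bullet> (w - w0) + 1/2 * ((A *v (w - w0)) \<bullet> (w - w0))) w
         = g + A *v (w - w0)"
proof (rule grad_eqI)
  have "((\<lambda>w. A *v (w - w0)) has_derivative (*v) A) (at w)"
    by (rule bounded_linear.has_derivative[OF matrix_vector_mul_bounded_linear])
      (auto intro!: derivative_eq_intros)
  then have "((\<lambda>w. c + g \<bullet> (w - w0) + 1/2 * ((A *v (w - w0)) \<bullet> (w - w0))) has_derivative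
        (\<lambda>h. g \<bullet> h + 1/2 * ((A *v (w - w0)) \<bullet> h + (A *v h) \<bullet> (w - w0)))) (at w)"
    by (auto intro!: derivative_eq_intros)
  moreover have "(\<lambda>h. g \<bullet> h + 1/2 * ((A *v (w - w0)) \<bullet> h + (A *v h) \<bullet> (w - w0)))
                 = (\<lambda>h. (g + A *v (w - w0)) \<bullet> h)"
    using symm[of h "w - w0" for h] by (auto simp: fun_eq_iff inner_add_left)
  ultimately show "((\<lambda>w. c + g \<bullet> (w - w0) + 1/2 * ((A *v (w - w0)) \<bullet> (w - w0))) has_derivative
                    (\<lambda>h. (g + A *v (w - w0)) \<bullet> h)) (at w)"
    by simp
qed

lemma grad_qmodel:
  fixes f :: "real^'n \<Rightarrow> real"
  assumes "twice_differentiable f"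
  shows "grad (qmodel f wt) w = grad f wt + hess f wt *v (w - wt)"
  unfolding qmodel_def[abs_def]
  by (rule grad_quadratic[OF hess_symmetric[OF assms]])

definition step_size :: "real \<Rightarrow> real \<Rightarrow> 'a::real_normed_vector \<Rightarrow> real \<Rightarrow> real" where
  "step_size lam a v sc = pos (a - (1 - lam) * sc) / (1 - lam + (norm v)\<^sup>2)"

lemma step_size_altdef:
  assumes "lam < 1"
  shows "step_size lam a v sc = pos ((a - (1 - lam) * sc) / (1 - lam + (norm v)\<^sup>2))"
proof -
  have "1 - lam + (norm v)\<^sup>2 > 0"
    using assms by (simp add: add_pos_nonneg)
  then show ?thesis
    unfolding step_size_def pos_def by (simp add: zero_le_divide_iff)
qed

lemma step_size_nonneg: "lam < 1 \<Longrightarrow> step_size lam a v sc \<ge> 0"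
  unfolding step_size_def pos_def by (simp add: add_pos_nonneg)

lemma obj_diff_step:
  "obj lam wc sc w s - obj lam wc sc (wc - \<Gamma> *\<^sub>R v) ((1 - lam) * (sc + \<Gamma>))
   = (1 - lam) / 2 * (norm (w - (wc - \<Gamma> *\<^sub>R v)))\<^sup>2 + 1/2 * (s - (1 - lam) * (sc + \<Gamma>))\<^sup>2
     + (1 - lam) * \<Gamma> * (s - (1 - lam) * (sc + \<Gamma>) - v \<bullet> (w - (wc - \<Gamma> *\<^sub>R v)))"
proof -
  define d where "d = w - (wc - \<Gamma> *\<^sub>R v)"
  have "(norm (w - wc))\<^sup>2 = (norm (d - \<Gamma> *\<^sub>R v))\<^sup>2"
    by (simp add: d_def)
  also have "\<dots> = (norm d)\<^sup>2 - 2 * \<Gamma> * (v \<bullet> d) + \<Gamma>\<^sup>2 * (norm v)\<^sup>2"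
    unfolding power2_norm_eq_inner
    by (simp add: inner_diff_left inner_diff_right inner_commute power2_eq_square algebra_simps)
  finally have nw: "(norm (w - wc))\<^sup>2 = (norm d)\<^sup>2 - 2 * \<Gamma> * (v \<bullet> d) + \<Gamma>\<^sup>2 * (norm v)\<^sup>2" .
  moreover have nws: "(norm ((wc - \<Gamma> *\<^sub>R v) - wc))\<^sup>2 = \<Gamma>\<^sup>2 * (norm v)\<^sup>2"
    by (simp add: power_mult_distrib)
  show ?thesis
    unfolding obj_def d_def[symmetric] nw nws by (simp add: power2_eq_square field_simps)
qed

lemma step_candidate_feasible:
  fixes a sc :: real and v :: "'a::real_inner"
  assumes "lam < 1"
  defines "\<Gamma> \<equiv> step_size lam a v sc"
  shows "a + v \<bullet> ((wc - \<Gamma> *\<^sub>R v) - wc) \<le> (1 - lam) * (sc + \<Gamma>)"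
proof -
  have den: "1 - lam + (norm v)\<^sup>2 > 0"
    using assms(1) by (simp add: add_pos_nonneg)
  have "a - (1 - lam) * sc \<le> \<Gamma> * (1 - lam + (norm v)\<^sup>2)"
    using den by (simp add: \<Gamma>_def step_size_def pos_def)
  then show ?thesis
    by (simp add: power2_norm_eq_inner algebra_simps)
qed

text \<open>Complementary slackness: the step size is positive only when the linearised constraint
  is active at the candidate.\<close>
lemma step_candidate_slack:
  fixes a sc :: real and v :: "'a::real_inner"
  assumes "lam < 1" and feasible: "a + v \<bullet> (w - wc) \<le> s"
  defines "\<Gamma> \<equiv> step_size lam a v sc"
  shows "\<Gamma> * (s - (1 - lam) * (sc + \<Gamma>) - v \<bullet> (w - (wc - \<Gamma> *\<^sub>R v))) \<ge> 0"
proof (cases "\<Gamma> = 0")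
  case False
  have den: "1 - lam + (norm v)\<^sup>2 > 0"
    using assms(1) by (simp add: add_pos_nonneg)
  with False have "\<Gamma> * (1 - lam + (norm v)\<^sup>2) = a - (1 - lam) * sc" and "\<Gamma> > 0"
    by (auto simp: \<Gamma>_def step_size_def pos_def split: if_splits)
  then have "s - (1 - lam) * (sc + \<Gamma>) - v \<bullet> (w - (wc - \<Gamma> *\<^sub>R v)) = s - (a + v \<bullet> (w - wc))"
    by (simp add: power2_norm_eq_inner inner_diff_right algebra_simps)
  with feasible \<open>\<Gamma> > 0\<close> show ?thesis
    by simp
qed simp

lemma is_step_min_closed_form:
  assumes lam: "0 \<le> lam" "lam < 1" and "sc \<ge> 0"
    and min: "is_step_min lam q wc sc w s"
  defines "\<Gamma> \<equiv> step_size lam (q wc) (grad q wc) sc"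
  shows "w = wc - \<Gamma> *\<^sub>R grad q wc" and "s = (1 - lam) * (sc + \<Gamma>)"
proof -
  let ?v = "grad q wc"
  let ?ws = "wc - \<Gamma> *\<^sub>R ?v" and ?ss = "(1 - lam) * (sc + \<Gamma>)"
  have feasible: "q wc + ?v \<bullet> (w - wc) \<le> s"
    and optimal: "\<And>w' s'. s' \<ge> 0 \<Longrightarrow> q wc + ?v \<bullet> (w' - wc) \<le> s'
                    \<Longrightarrow> obj lam wc sc w s \<le> obj lam wc sc w' s'"
    using min unfolding is_step_min_def Let_def by auto
  have "?ss \<ge> 0"
    using lam \<open>sc \<ge> 0\<close> step_size_nonneg[OF lam(2)] unfolding \<Gamma>_def
    by (intro mult_nonneg_nonneg add_nonneg_nonneg) auto
  moreover have "q wc + ?v \<bullet> (?ws - wc) \<le> ?ss"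
    using step_candidate_feasible[OF lam(2)] unfolding \<Gamma>_def .
  ultimately have "obj lam wc sc w s - obj lam wc sc ?ws ?ss \<le> 0"
    using optimal by simp
  moreover have "(1 - lam) * (\<Gamma> * (s - ?ss - ?v \<bullet> (w - ?ws))) \<ge> 0"
    using lam step_candidate_slack[OF lam(2) feasible] by (simp add: \<Gamma>_def)
  ultimately have "(1 - lam) / 2 * (norm (w - ?ws))\<^sup>2 + 1/2 * (s - ?ss)\<^sup>2 \<le> 0"
    unfolding obj_diff_step by (simp add: algebra_simps)
  moreover have "(1 - lam) / 2 * (norm (w - ?ws))\<^sup>2 \<ge> 0"
    using lam by simp
  ultimately have "(1 - lam) / 2 * (norm (w - ?ws))\<^sup>2 = 0" and "(s - ?ss)\<^sup>2 = 0"
    using zero_le_power2[of "s - ?ss"] by linarith+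
  then show "w = ?ws" and "s = ?ss"
    using lam by simp_all
qed

lemma qmodel_gradient_step:
  "qmodel f wt (wt - c *\<^sub>R grad f wt)
   = f wt - c * (norm (grad f wt))\<^sup>2 + 1/2 * c\<^sup>2 * ((hess f wt *v grad f wt) \<bullet> grad f wt)"
proof -
  have step: "wt - c *\<^sub>R grad f wt - wt = (- c) *\<^sub>R grad f wt"
    by simp
  show ?thesis
    unfolding qmodel_def step matrix_vector_mult_scaleR power2_norm_eq_inner
    by (simp add: power2_eq_square)
qed

lemma grad_qmodel_gradient_step:
  assumes "twice_differentiable f"
  shows "grad (qmodel f wt) (wt - c *\<^sub>R grad f wt) = grad f wt - c *\<^sub>R (hess f wt *v grad f wt)"
  by (simp add: grad_qmodel[OF assms] matrix_vector_mult_scaleR linear_neg[OF matrix_vector_mul_linear])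

theorem lemma7:
  fixes f :: "real^'n \<Rightarrow> real"
    and lam st sh s1 :: real
    and wt wh w1 :: "real^'n"
  assumes f2: "twice_differentiable f"
    and lam: "0 \<le> lam" "lam < 1"
    and st: "st \<ge> 0"
    and half: "is_step_min lam (qmodel f wt) wt st wh sh"
    and full: "is_step_min lam (qmodel f wt) wh sh w1 s1"
  shows "let g = grad f wt; H = hess f wt;
             G1 = pos (f wt - (1 - lam) * st) / (1 - lam + (norm g)\<^sup>2);
             G2 = pos ((f wt - G1 * (norm g)\<^sup>2 - (1 - lam)\<^sup>2 * (st + G1)
                        + 1/2 * G1\<^sup>2 * ((H *v g) \<bullet> g))
                       / (1 - lam + (norm (g - G1 *\<^sub>R (H *v g)))\<^sup>2))
         in w1 = wt - (G1 + G2) *\<^sub>R g + (G2 * G1) *\<^sub>R (H *v g)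
          \<and> s1 = (1 - lam) * ((1 - lam) * (st + G1) + G2)"
proof -
  define g where "g = grad f wt"
  define H where "H = hess f wt"
  define G1 where "G1 = step_size lam (f wt) g st"
  define G2 where "G2 = step_size lam (qmodel f wt wh) (grad (qmodel f wt) wh) sh"
  have wh: "wh = wt - G1 *\<^sub>R g" and sh: "sh = (1 - lam) * (st + G1)"
    using is_step_min_closed_form[OF lam st half]
    by (simp_all add: grad_qmodel[OF f2] qmodel_def g_def G1_def)
  have "sh \<ge> 0"
    using half by (simp add: is_step_min_def)
  then have w1: "w1 = wh - G2 *\<^sub>R (g - G1 *\<^sub>R (H *v g))" and s1: "s1 = (1 - lam) * (sh + G2)"
    using is_step_min_closed_form[OF lam _ full]
    by (simp_all add: G2_def wh g_def H_def grad_qmodel_gradient_step[OF f2])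
  have G1: "G1 = pos (f wt - (1 - lam) * st) / (1 - lam + (norm g)\<^sup>2)"
    by (simp add: G1_def step_size_def)
  have G2: "G2 = pos ((f wt - G1 * (norm g)\<^sup>2 - (1 - lam)\<^sup>2 * (st + G1)
                        + 1/2 * G1\<^sup>2 * ((H *v g) \<bullet> g))
                       / (1 - lam + (norm (g - G1 *\<^sub>R (H *v g)))\<^sup>2))"
    using lam(2)
    by (simp add: G2_def step_size_altdef wh sh g_def H_def qmodel_gradient_step
        grad_qmodel_gradient_step[OF f2] power2_eq_square algebra_simps)
  show ?thesis
    unfolding Let_def g_def[symmetric] H_def[symmetric] G1[symmetric] G2[symmetric]
    using w1 s1 wh sh by (simp add: algebra_simps)
qed

end
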